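(* Let $k\ge1$ and let $(T,o)$ be a valid finite rooted tree. If $K\subset V(T)$ satisfies $m(K,T)>0$ and $v_0\in V(T)\setminus K$, then $m(K\cup\{v_0\},T)<m(K,T)$.
   Context: Trees. For a finite rooted tree $(T,o)$, the height of a vertex is its distance from $o$ and the height of $T$ is the maximal height of a vertex. Vertices of even (odd) height are called even (odd); $V(T)$ and $U(T)$ denote the sets of even and odd vertices. $(T,o)$ is valid if its height is even and every odd vertex has degree exactly $k+1$ in $T$. For $K\subset V(T)$, $m(K,T)$ is the number of matchings of $T$ in which every vertex of $K\cup U(T)$ is saturated. *)

theory Defs
  imports Main
begin

definition graph :: "'a set \<Rightarrow> 'a set set \<Rightarrow> bool" where
  "graph VS E \<longleftrightarrow> finite VS \<and> (\<forall>e\<in>E. e \<subseteq> VS \<and> card e = 2)"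

definition walk :: "'a set \<Rightarrow> 'a set set \<Rightarrow> 'a list \<Rightarrow> bool" where
  "walk VS E xs \<longleftrightarrow> xs \<noteq> [] \<and> set xs \<subseteq> VS \<and>
     (\<forall>i. Suc i < length xs \<longrightarrow> {xs ! i, xs ! Suc i} \<in> E)"

definition connected_graph :: "'a set \<Rightarrow> 'a set set \<Rightarrow> bool" where
  "connected_graph VS E \<longleftrightarrow>
     (\<forall>u\<in>VS. \<forall>v\<in>VS. \<exists>xs. walk VS E xs \<and> hd xs = u \<and> last xs = v)"

definition is_cycle :: "'a set \<Rightarrow> 'a set set \<Rightarrow> 'a list \<Rightarrow> bool" where
  "is_cycle VS E xs \<longleftrightarrow> walk VS E xs \<and> distinct xs \<and> length xs \<ge> 3 \<and>
     {last xs, hd xs} \<in> E"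

definition is_tree :: "'a set \<Rightarrow> 'a set set \<Rightarrow> bool" where
  "is_tree VS E \<longleftrightarrow> graph VS E \<and> VS \<noteq> {} \<and> connected_graph VS E \<and>
     \<not> (\<exists>xs. is_cycle VS E xs)"

definition tdist :: "'a set \<Rightarrow> 'a set set \<Rightarrow> 'a \<Rightarrow> 'a \<Rightarrow> nat" where
  "tdist VS E u v = (LEAST n. \<exists>xs. walk VS E xs \<and> hd xs = u \<and> last xs = v \<and> length xs = Suc n)"

definition vheight :: "'a set \<Rightarrow> 'a set set \<Rightarrow> 'a \<Rightarrow> 'a \<Rightarrow> nat" where
  "vheight VS E r v = tdist VS E r v"

definition theight :: "'a set \<Rightarrow> 'a set set \<Rightarrow> 'a \<Rightarrow> nat" where
  "theight VS E r = Max (vheight VS E r ` VS)"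

definition even_vertices :: "'a set \<Rightarrow> 'a set set \<Rightarrow> 'a \<Rightarrow> 'a set" where
  "even_vertices VS E r = {v\<in>VS. even (vheight VS E r v)}"

definition odd_vertices :: "'a set \<Rightarrow> 'a set set \<Rightarrow> 'a \<Rightarrow> 'a set" where
  "odd_vertices VS E r = {v\<in>VS. odd (vheight VS E r v)}"

definition degree :: "'a set set \<Rightarrow> 'a \<Rightarrow> nat" where
  "degree E v = card {e\<in>E. v \<in> e}"

definition rooted_tree :: "'a set \<Rightarrow> 'a set set \<Rightarrow> 'a \<Rightarrow> bool" where
  "rooted_tree VS E r \<longleftrightarrow> is_tree VS E \<and> r \<in> VS"

definition valid :: "nat \<Rightarrow> 'a set \<Rightarrow> 'a set set \<Rightarrow> 'a \<Rightarrow> bool" where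
  "valid k VS E r \<longleftrightarrow> rooted_tree VS E r \<and> even (theight VS E r) \<and>
     (\<forall>v\<in>odd_vertices VS E r. degree E v = k + 1)"

definition matching :: "'a set set \<Rightarrow> 'a set set \<Rightarrow> bool" where
  "matching E M \<longleftrightarrow> M \<subseteq> E \<and> (\<forall>e\<in>M. \<forall>f\<in>M. e \<noteq> f \<longrightarrow> e \<inter> f = {})"

text \<open>m(K,T): number of matchings saturating every vertex of K \<union> U(T).\<close>

definition mcount :: "'a set \<Rightarrow> 'a set set \<Rightarrow> 'a \<Rightarrow> 'a set \<Rightarrow> nat" where
  "mcount VS E r K = card {M. matching E M \<and>
     (\<forall>v \<in> K \<union> odd_vertices VS E r. v \<in> \<Union>M)}"

end

(*
  If v0 is matched to u by a matching M saturating K \<union> U, delete that edge: now u, an odd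
  vertex, is exposed.  Since u has degree k + 1 \<ge> 2, it has a neighbour w other than the vertex
  we came from; match u to w, and if w was matched to u', the odd vertex u' becomes exposed
  instead (odd and even vertices alternate along edges).  The vertices visited form a
  non-backtracking walk, which in a tree never repeats a vertex, so the process stops with a
  matching that saturates K \<union> U but not v0.  Hence the matchings counted by m(K \<union> {v0}, T)
  form a proper subset of those counted by m(K, T).
*)
theory Submission
  imports Defs
begin

lemma walk_nonempty: "walk VS E xs \<Longrightarrow> xs \<noteq> []"
  by (simp add: walk_def)

lemma walk_singleton [simp]: "walk VS E [x] \<longleftrightarrow> x \<in> VS"
  by (simp add: walk_def)

lemma walk_append_iff:
  assumes "xs \<noteq> []" "ys \<noteq> []"
  shows "walk VS E (xs @ ys) \<longleftrightarrow> walk VS E xs \<and> walk VS E ys \<and> {last xs, hd ys} \<in> E"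
proof
  assume w: "walk VS E (xs @ ys)"
  have step: "{(xs @ ys) ! i, (xs @ ys) ! Suc i} \<in> E" if "Suc i < length xs + length ys" for i
    using w that by (simp add: walk_def)
  have "walk VS E xs"
    unfolding walk_def
  proof (intro conjI allI impI)
    show "xs \<noteq> []" "set xs \<subseteq> VS" using w assms by (auto simp: walk_def)
    show "{xs ! i, xs ! Suc i} \<in> E" if "Suc i < length xs" for i
      using step[of i] that by (simp add: nth_append)
  qed
  moreover have "walk VS E ys"
    unfolding walk_def
  proof (intro conjI allI impI)
    show "ys \<noteq> []" "set ys \<subseteq> VS" using w assms by (auto simp: walk_def)
    show "{ys ! i, ys ! Suc i} \<in> E" if "Suc i < length ys" for i
      using step[of "length xs + i"] that by (simp add: nth_append)
  qed
  moreover have "{last xs, hd ys} \<in> E"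
    using step[of "length xs - 1"] assms
    by (simp add: nth_append last_conv_nth hd_conv_nth)
  ultimately show "walk VS E xs \<and> walk VS E ys \<and> {last xs, hd ys} \<in> E" by blast
next
  assume "walk VS E xs \<and> walk VS E ys \<and> {last xs, hd ys} \<in> E"
  then have xs: "walk VS E xs" and ys: "walk VS E ys" and e: "{last xs, hd ys} \<in> E" by auto
  show "walk VS E (xs @ ys)"
    unfolding walk_def
  proof (intro conjI allI impI)
    show "xs @ ys \<noteq> []" "set (xs @ ys) \<subseteq> VS" using xs ys by (auto simp: walk_def)
    fix i assume i: "Suc i < length (xs @ ys)"
    consider "Suc i < length xs" | "Suc i = length xs" | "length xs \<le> i" by linarith
    then show "{(xs @ ys) ! i, (xs @ ys) ! Suc i} \<in> E"
    proof cases
      case 1 then show ?thesis using xs by (simp add: walk_def nth_append)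
    next
      case 2
      then have "i = length xs - 1" by simp
      then show ?thesis using e assms 2 by (simp add: nth_append last_conv_nth hd_conv_nth)
    next
      case 3
      then have "Suc (i - length xs) < length ys" using i by simp
      then show ?thesis using ys 3 by (simp add: walk_def nth_append Suc_diff_le)
    qed
  qed
qed

lemma walk_appendI:
  "walk VS E xs \<Longrightarrow> walk VS E ys \<Longrightarrow> {last xs, hd ys} \<in> E \<Longrightarrow> walk VS E (xs @ ys)"
  using walk_append_iff[of xs ys] walk_nonempty by blast

lemma walk_take:
  assumes "walk VS E xs" "0 < j"
  shows "walk VS E (take j xs)"
proof (cases "j < length xs")
  case True
  then have "take j xs \<noteq> []" "drop j xs \<noteq> []" using assms by (auto simp: walk_def)
  then show ?thesis using assms(1) walk_append_iff[of "take j xs" "drop j xs" VS E] by simp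
qed (use assms in simp)

lemma walk_drop:
  assumes "walk VS E xs" "j < length xs"
  shows "walk VS E (drop j xs)"
proof (cases j)
  case (Suc j')
  then have "take j xs \<noteq> []" "drop j xs \<noteq> []" using assms by auto
  then show ?thesis using assms(1) walk_append_iff[of "take j xs" "drop j xs" VS E] by simp
qed (use assms in simp)

lemma walk_rev: "walk VS E xs \<Longrightarrow> walk VS E (rev xs)"
proof (induction xs)
  case (Cons x xs)
  show ?case
  proof (cases "xs = []")
    case False
    then have "walk VS E xs" "{x, hd xs} \<in> E" "x \<in> VS"
      using Cons.prems walk_append_iff[of "[x]" xs] by (auto simp: walk_def)
    then show ?thesis
      using Cons.IH False walk_append_iff[of "rev xs" "[x]"] by (simp add: last_rev insert_commute)
  qed (use Cons.prems in \<open>simp add: walk_def\<close>)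
qed simp

lemma walk_join:
  assumes "walk VS E xs" "walk VS E ys" "last xs = hd ys"
  shows "walk VS E (xs @ tl ys)"
proof (cases "tl ys = []")
  case False
  have "ys = [hd ys] @ tl ys" using assms(2) by (simp add: walk_def)
  then have "walk VS E (tl ys)" "{hd ys, hd (tl ys)} \<in> E"
    using assms(2) False walk_append_iff[of "[hd ys]" "tl ys"] by auto
  moreover have "xs \<noteq> []" using assms(1) by (simp add: walk_def)
  ultimately show ?thesis
    using assms(1,3) False walk_append_iff[of xs "tl ys"] by simp
qed (use assms in simp)

lemma last_append_tl:
  "xs \<noteq> [] \<Longrightarrow> ys \<noteq> [] \<Longrightarrow> last xs = hd ys \<Longrightarrow> last (xs @ tl ys) = last ys"
  by (cases ys) auto

definition non_backtracking :: "'a list \<Rightarrow> bool" where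
  "non_backtracking xs \<longleftrightarrow> (\<forall>i. i + 2 < length xs \<longrightarrow> xs ! i \<noteq> xs ! (i + 2))"

lemma non_backtracking_snoc:
  "non_backtracking (xs @ [y]) \<longleftrightarrow>
     non_backtracking xs \<and> (2 \<le> length xs \<longrightarrow> xs ! (length xs - 2) \<noteq> y)"
  unfolding non_backtracking_def
proof (intro iffI conjI impI allI)
  assume nb: "\<forall>i. i + 2 < length (xs @ [y]) \<longrightarrow> (xs @ [y]) ! i \<noteq> (xs @ [y]) ! (i + 2)"
  show "xs ! i \<noteq> xs ! (i + 2)" if "i + 2 < length xs" for i
    using nb[rule_format, of i] that by (simp add: nth_append)
  show "xs ! (length xs - 2) \<noteq> y" if "2 \<le> length xs"
  proof -
    have "length xs - 2 + 2 = length xs" using that by simp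
    then show ?thesis using nb[rule_format, of "length xs - 2"] that by (simp add: nth_append)
  qed
next
  fix i
  assume nb: "(\<forall>i. i + 2 < length xs \<longrightarrow> xs ! i \<noteq> xs ! (i + 2)) \<and>
    (2 \<le> length xs \<longrightarrow> xs ! (length xs - 2) \<noteq> y)" and i: "i + 2 < length (xs @ [y])"
  show "(xs @ [y]) ! i \<noteq> (xs @ [y]) ! (i + 2)"
  proof (cases "i + 2 < length xs")
    case False
    then have "i + 2 = length xs" "i = length xs - 2" using i by simp_all
    then show ?thesis using nb by (simp add: nth_append)
  qed (use nb in \<open>simp add: nth_append\<close>)
qed

lemma non_backtracking_walk_distinct:
  assumes G: "graph VS E" and acyclic: "\<nexists>ys. is_cycle VS E ys"
  shows "walk VS E xs \<Longrightarrow> non_backtracking xs \<Longrightarrow> distinct xs"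
proof (induction xs rule: rev_induct)
  case (snoc y xs)
  show ?case
  proof (cases "xs = []")
    case False
    have walk: "walk VS E xs" and edge: "{last xs, y} \<in> E"
      using snoc.prems(1) False walk_append_iff[of xs "[y]"] by auto
    have nb: "non_backtracking xs" and no_return: "2 \<le> length xs \<longrightarrow> xs ! (length xs - 2) \<noteq> y"
      using snoc.prems(2) non_backtracking_snoc[of xs y] by auto
    have dist: "distinct xs" using snoc.IH walk nb by blast
    have "y \<notin> set xs"
    proof
      assume "y \<in> set xs"
      then obtain i where i: "i < length xs" "xs ! i = y" by (auto simp: in_set_conv_nth)
      consider "i + 1 = length xs" | "i + 2 = length xs" | "i + 3 \<le> length xs" using i by linarith
      then show False
      proof cases
        case 1
        then have "last xs = y" using i False by (simp add: last_conv_nth flip: 1)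
        then have "{y} \<in> E" using edge by simp
        then show False using G by (auto simp: graph_def)
      next
        case 2
        then show False using no_return i by (metis add_diff_cancel_right' le_add2)
      next
        case 3
        have "is_cycle VS E (drop i xs)"
          unfolding is_cycle_def
          using walk_drop[OF walk i(1)] dist 3 edge i by (simp add: hd_drop_conv_nth)
        then show False using acyclic by blast
      qed
    qed
    then show ?thesis using dist by simp
  qed simp
qed simp

lemma tdist_le_walk:
  assumes "walk VS E P" "hd P = r" "last P = a"
  shows "tdist VS E r a \<le> length P - 1"
proof -
  have "length P = Suc (length P - 1)" using assms by (simp add: walk_def)
  then show ?thesis unfolding tdist_def using assms by (intro Least_le) blast
qed

lemma shortest_walk_exists:
  assumes "connected_graph VS E" "r \<in> VS" "a \<in> VS"
  obtains P where "walk VS E P" "hd P = r" "last P = a" "length P = Suc (tdist VS E r a)"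
proof -
  obtain xs where xs: "walk VS E xs" "hd xs = r" "last xs = a"
    using assms unfolding connected_graph_def by blast
  then have "length xs = Suc (length xs - 1)" by (simp add: walk_def)
  then have "\<exists>n xs. walk VS E xs \<and> hd xs = r \<and> last xs = a \<and> length xs = Suc n"
    using xs by blast
  from LeastI_ex[OF this] show ?thesis using that unfolding tdist_def by blast
qed

lemma tdist_shortest_walk_nth:
  assumes conn: "connected_graph VS E" and "r \<in> VS"
    and P: "walk VS E P" "hd P = r" "last P = a" "length P = Suc (tdist VS E r a)"
    and t: "t < length P"
  shows "tdist VS E r (P ! t) = t"
proof (rule antisym)
  have "walk VS E (take (Suc t) P)" using walk_take[OF P(1)] by simp
  moreover have "hd (take (Suc t) P) = r" using P(2) t by (cases P) auto
  moreover have "last (take (Suc t) P) = P ! t" using t by (simp add: take_Suc_conv_app_nth)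
  ultimately
  have "tdist VS E r (P ! t) \<le> length (take (Suc t) P) - 1" by (rule tdist_le_walk)
  then show "tdist VS E r (P ! t) \<le> t" using t by simp
  show "t \<le> tdist VS E r (P ! t)"
  proof (rule ccontr)
    assume shorter: "\<not> t \<le> tdist VS E r (P ! t)"
    have "P ! t \<in> VS" using P(1) t by (auto simp: walk_def)
    then obtain Q where Q: "walk VS E Q" "hd Q = r" "last Q = P ! t"
      "length Q = Suc (tdist VS E r (P ! t))"
      using shortest_walk_exists[OF conn \<open>r \<in> VS\<close>] by blast
    let ?R = "Q @ tl (drop t P)"
    have "walk VS E ?R"
      using walk_join[OF Q(1) walk_drop[OF P(1) t]] Q(3) t by (simp add: hd_drop_conv_nth)
    moreover have "hd ?R = r" using Q(2) walk_nonempty[OF Q(1)] by simp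
    moreover have "last ?R = last (drop t P)"
      using walk_nonempty[OF Q(1)] Q(3) t by (intro last_append_tl) (simp_all add: hd_drop_conv_nth)
    then have "last ?R = a" using P(3) t by (simp add: last_drop)
    ultimately have "tdist VS E r a \<le> length ?R - 1" by (rule tdist_le_walk)
    then show False using shorter Q(4) P(4) t by simp
  qed
qed

lemma tdist_edge_le:
  assumes conn: "connected_graph VS E" and "r \<in> VS" "a \<in> VS" "b \<in> VS" "{a, b} \<in> E"
  shows "tdist VS E r b \<le> tdist VS E r a + 1"
proof -
  obtain P where P: "walk VS E P" "hd P = r" "last P = a" "length P = Suc (tdist VS E r a)"
    using shortest_walk_exists[OF assms(1-3)] .
  have "walk VS E (P @ [b])" using walk_appendI[OF P(1), of "[b]"] P(3) assms(4,5) by simp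
  moreover have "hd (P @ [b]) = r" using P(2) walk_nonempty[OF P(1)] by simp
  moreover have "last (P @ [b]) = b" by simp
  ultimately
  have "tdist VS E r b \<le> length (P @ [b]) - 1" by (rule tdist_le_walk)
  then show ?thesis using P(4) by simp
qed

lemma distinct_hd_neq_last: "distinct xs \<Longrightarrow> 2 \<le> length xs \<Longrightarrow> hd xs \<noteq> last xs"
  by (cases xs) auto

lemma shortest_walks_non_backtracking:
  assumes conn: "connected_graph VS E" and "r \<in> VS"
    and P: "walk VS E P" "hd P = r" "length P = Suc n" "tdist VS E r (last P) = n"
    and Q: "walk VS E Q" "hd Q = r" "length Q = Suc n" "tdist VS E r (last Q) = n"
  shows "non_backtracking (P @ rev Q)"
proof -
  define W where "W = P @ rev Q"
  have height: "tdist VS E r (W ! i) = (if i \<le> n then i else 2 * n + 1 - i)"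
    if "i < 2 * n + 2" for i
  proof (cases "i \<le> n")
    case True
    then show ?thesis
      using tdist_shortest_walk_nth[OF conn \<open>r \<in> VS\<close> P(1,2) refl] P(3,4) W_def
      by (simp add: nth_append)
  next
    case False
    then have "W ! i = Q ! (2 * n + 1 - i)"
      using P(3) Q(3) that W_def by (simp add: nth_append rev_nth mult_2)
    then show ?thesis
      using tdist_shortest_walk_nth[OF conn \<open>r \<in> VS\<close> Q(1,2) refl] Q(3,4) False that by simp
  qed
  show ?thesis
    unfolding non_backtracking_def W_def[symmetric]
  proof (intro allI impI)
    fix i assume i: "i + 2 < length W"
    have len: "length W = 2 * n + 2" using P(3) Q(3) W_def by simp
    have "(if i \<le> n then i else 2 * n + 1 - i) \<noteq>
        (if i + 2 \<le> n then i + 2 else 2 * n + 1 - (i + 2))"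
      using i len by presburger
    then have "tdist VS E r (W ! i) \<noteq> tdist VS E r (W ! (i + 2))"
      using height[of i] height[of "i + 2"] i len by simp
    then show "W ! i \<noteq> W ! (i + 2)" by auto
  qed
qed

text \<open>Two shortest walks from the root to the ends of an edge of equal height would close
  up, through that edge, into a non-backtracking closed walk.\<close>

lemma tdist_edge_neq:
  assumes tree: "is_tree VS E" and "r \<in> VS" and e: "{a, b} \<in> E"
  shows "tdist VS E r a \<noteq> tdist VS E r b"
proof
  assume eq: "tdist VS E r a = tdist VS E r b"
  have G: "graph VS E" and conn: "connected_graph VS E" and acyclic: "\<nexists>ys. is_cycle VS E ys"
    using tree unfolding is_tree_def by auto
  have "a \<in> VS" "b \<in> VS" using G e unfolding graph_def by auto
  obtain P where P: "walk VS E P" "hd P = r" "last P = a" "length P = Suc (tdist VS E r a)"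
    using shortest_walk_exists[OF conn \<open>r \<in> VS\<close> \<open>a \<in> VS\<close>] .
  obtain Q where Q: "walk VS E Q" "hd Q = r" "last Q = b" "length Q = Suc (tdist VS E r a)"
    using shortest_walk_exists[OF conn \<open>r \<in> VS\<close> \<open>b \<in> VS\<close>] eq by metis
  have "{last P, hd (rev Q)} \<in> E" using P(3) Q(3) e walk_nonempty[OF Q(1)] by (simp add: hd_rev)
  then have "walk VS E (P @ rev Q)" using walk_appendI[OF P(1) walk_rev[OF Q(1)]] by blast
  moreover have "non_backtracking (P @ rev Q)"
    using shortest_walks_non_backtracking[OF conn \<open>r \<in> VS\<close> P(1,2,4) _ Q(1,2,4)] P(3) Q(3) eq
    by simp
  ultimately have "distinct (P @ rev Q)" by (rule non_backtracking_walk_distinct[OF G acyclic])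
  moreover have "hd (P @ rev Q) = last (P @ rev Q)"
    using P(2) Q(2) walk_nonempty[OF P(1)] walk_nonempty[OF Q(1)] by (simp add: last_rev)
  ultimately show False using distinct_hd_neq_last P(4) Q(4) by fastforce
qed

lemma tdist_edge_parity:
  assumes tree: "is_tree VS E" and "r \<in> VS" and e: "{a, b} \<in> E"
  shows "odd (tdist VS E r a) \<longleftrightarrow> even (tdist VS E r b)"
proof -
  have G: "graph VS E" and conn: "connected_graph VS E" using tree unfolding is_tree_def by auto
  have "a \<in> VS" "b \<in> VS" using G e unfolding graph_def by auto
  have "{b, a} \<in> E" using e by (simp add: insert_commute)
  have "tdist VS E r b \<le> tdist VS E r a + 1"
    using tdist_edge_le[OF conn \<open>r \<in> VS\<close> \<open>a \<in> VS\<close> \<open>b \<in> VS\<close> e] .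
  moreover have "tdist VS E r a \<le> tdist VS E r b + 1"
    using tdist_edge_le[OF conn \<open>r \<in> VS\<close> \<open>b \<in> VS\<close> \<open>a \<in> VS\<close> \<open>{b, a} \<in> E\<close>] .
  moreover have "tdist VS E r a \<noteq> tdist VS E r b" using tdist_edge_neq[OF tree \<open>r \<in> VS\<close> e] .
  ultimately show ?thesis by presburger
qed

lemma odd_vertices_edge_iff:
  assumes "is_tree VS E" "r \<in> VS" "{a, b} \<in> E"
  shows "a \<in> odd_vertices VS E r \<longleftrightarrow> b \<notin> odd_vertices VS E r"
proof -
  have "a \<in> VS" "b \<in> VS" using assms(1,3) unfolding is_tree_def graph_def by auto
  then show ?thesis
    using tdist_edge_parity[OF assms] unfolding odd_vertices_def vheight_def by simp
qed

lemma graph_finite_edges: "graph VS E \<Longrightarrow> finite E"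
  unfolding graph_def by (meson Pow_iff finite_Pow_iff rev_finite_subset subsetI)

lemma card_2_other:
  assumes "card e = 2" "u \<in> e"
  obtains w where "w \<noteq> u" "e = {u, w}"
proof -
  obtain x y where e: "e = {x, y}" "x \<noteq> y" using assms(1) unfolding card_2_iff by blast
  show ?thesis
  proof (cases "u = x")
    case True
    then show ?thesis using that[of y] e by blast
  next
    case False
    then show ?thesis using that[of x] e assms(2) by (auto simp: insert_commute)
  qed
qed

lemma exists_neighbour_avoiding:
  assumes G: "graph VS E" and deg: "2 \<le> degree E u"
  obtains w where "{u, w} \<in> E" "w \<noteq> p"
proof -
  let ?D = "{e \<in> E. u \<in> e}"
  have "finite ?D" using graph_finite_edges[OF G] by simp
  then have "\<not> card ?D \<le> Suc 0" using deg unfolding degree_def by simp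
  then obtain e1 e2 where e: "e1 \<in> ?D" "e2 \<in> ?D" "e1 \<noteq> e2"
    using card_le_Suc0_iff_eq[OF \<open>finite ?D\<close>] by blast
  have "card e1 = 2" "card e2 = 2" using G e unfolding graph_def by auto
  obtain w1 where e1: "e1 = {u, w1}" using card_2_other[of e1 u] \<open>card e1 = 2\<close> e by blast
  obtain w2 where e2: "e2 = {u, w2}" using card_2_other[of e2 u] \<open>card e2 = 2\<close> e by blast
  have "w1 \<noteq> w2" using \<open>e1 \<noteq> e2\<close> e1 e2 by blast
  moreover have "{u, w1} \<in> E" "{u, w2} \<in> E" using e(1,2) e1 e2 by auto
  ultimately show ?thesis using that by (cases "w1 = p") auto
qed

lemma matching_subset: "matching E M \<Longrightarrow> N \<subseteq> M \<Longrightarrow> matching E N"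
  unfolding matching_def by blast

lemma matching_insert: "matching E M \<Longrightarrow> e \<in> E \<Longrightarrow> e \<inter> \<Union>M = {} \<Longrightarrow> matching E (insert e M)"
  unfolding matching_def by blast

lemma matching_Union_remove: "matching E M \<Longrightarrow> e \<in> M \<Longrightarrow> \<Union>(M - {e}) = \<Union>M - e"
  unfolding matching_def by blast

text \<open>A state of the search for a matching avoiding hd xs: the walk xs traces the vertices
  visited so far and is recorded only to prove termination and that the search never comes back
  to hd xs.\<close>

definition augmenting_state ::
    "'a set \<Rightarrow> 'a set set \<Rightarrow> 'a set \<Rightarrow> 'a set \<Rightarrow> 'a set set \<Rightarrow> 'a list \<Rightarrow> bool" where
  "augmenting_state VS E U S M xs \<longleftrightarrow> matching E M \<and> walk VS E xs \<and> non_backtracking xs \<and>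
     hd xs \<notin> U \<and> last xs \<in> U \<and> hd xs \<notin> \<Union>M \<and> last xs \<notin> \<Union>M \<and> S - {last xs} \<subseteq> \<Union>M"

lemma augmenting_state_close:
  assumes state: "augmenting_state VS E U S M xs"
    and uw: "{last xs, w} \<in> E" and "w \<noteq> hd xs" and "w \<notin> \<Union>M"
  shows "\<exists>M'. matching E M' \<and> hd xs \<notin> \<Union>M' \<and> S \<subseteq> \<Union>M'"
proof -
  have M: "matching E M" and hd_free: "hd xs \<notin> U" "hd xs \<notin> \<Union>M"
    and u: "last xs \<in> U" "last xs \<notin> \<Union>M" and covered: "S - {last xs} \<subseteq> \<Union>M"
    using state unfolding augmenting_state_def by auto
  have "{last xs, w} \<inter> \<Union>M = {}" using u \<open>w \<notin> \<Union>M\<close> by blast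
  then have "matching E (insert {last xs, w} M)" by (rule matching_insert[OF M uw])
  moreover have "hd xs \<notin> \<Union>(insert {last xs, w} M)" using hd_free u \<open>w \<noteq> hd xs\<close> by auto
  moreover have "S \<subseteq> \<Union>(insert {last xs, w} M)" using covered by auto
  ultimately show ?thesis by blast
qed

lemma augmenting_state_extend:
  assumes G: "graph VS E" and bip: "\<And>a b. {a, b} \<in> E \<Longrightarrow> a \<in> U \<longleftrightarrow> b \<notin> U"
    and state: "augmenting_state VS E U S M xs"
    and uw: "{last xs, w} \<in> E" and walk_w: "walk VS E (xs @ [w])"
    and nb_w: "non_backtracking (xs @ [w])" and "w \<noteq> hd xs" and e: "e \<in> M" "w \<in> e"
  shows "\<exists>M' u'. augmenting_state VS E U S M' (xs @ [w, u'])"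
proof -
  define u where "u = last xs"
  have M: "matching E M" and "xs \<noteq> []" and hd_free: "hd xs \<notin> U" "hd xs \<notin> \<Union>M"
    and u: "u \<in> U" "u \<notin> \<Union>M" and covered: "S - {u} \<subseteq> \<Union>M"
    using state walk_nonempty unfolding augmenting_state_def u_def by auto
  have "e \<in> E" using M e unfolding matching_def by blast
  then obtain u' where "u' \<noteq> w" and e_eq: "e = {w, u'}"
    using card_2_other[of e w] G e unfolding graph_def by blast
  have "u' \<in> U" using bip[OF uw] bip \<open>e \<in> E\<close> e_eq u u_def by (metis insert_commute)
  have "u' \<noteq> u" using u e e_eq by blast
  have "u' \<in> VS" using G \<open>e \<in> E\<close> e_eq unfolding graph_def by auto
  define M' where "M' = insert {u, w} (M - {e})"
  have Union_M': "\<Union>M' = {u, w} \<union> (\<Union>M - {w, u'})"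
    using matching_Union_remove[OF M e(1)] e_eq unfolding M'_def by auto
  have "{u, w} \<inter> \<Union>(M - {e}) = {}"
    using matching_Union_remove[OF M e(1)] e u by blast
  then have "matching E M'"
    unfolding M'_def u_def by (rule matching_insert[OF matching_subset[OF M Diff_subset] uw])
  moreover have "walk VS E ((xs @ [w]) @ [u'])"
    using walk_appendI[OF walk_w, of "[u']"] \<open>e \<in> E\<close> e_eq \<open>u' \<in> VS\<close> by simp
  moreover have "non_backtracking ((xs @ [w]) @ [u'])"
  proof -
    have "(xs @ [w]) ! (length (xs @ [w]) - 2) = u"
      using \<open>xs \<noteq> []\<close> u_def by (simp add: nth_append last_conv_nth)
    then show ?thesis using nb_w \<open>u' \<noteq> u\<close> non_backtracking_snoc[of "xs @ [w]" u'] by simp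
  qed
  moreover have "hd xs \<notin> \<Union>M'"
  proof -
    have "hd xs \<noteq> u" using hd_free(1) u(1) by blast
    then show ?thesis using Union_M' hd_free(2) \<open>w \<noteq> hd xs\<close> by auto
  qed
  moreover have "u' \<notin> \<Union>M'" using Union_M' \<open>u' \<noteq> u\<close> \<open>u' \<noteq> w\<close> by blast
  moreover have "S - {u'} \<subseteq> \<Union>M'" using Union_M' covered by blast
  ultimately have "augmenting_state VS E U S M' (xs @ [w, u'])"
    unfolding augmenting_state_def using hd_free \<open>u' \<in> U\<close> \<open>xs \<noteq> []\<close> by simp
  then show ?thesis by blast
qed

lemma augmenting_state_step:
  assumes G: "graph VS E" and acyclic: "\<nexists>ys. is_cycle VS E ys"
    and bip: "\<And>a b. {a, b} \<in> E \<Longrightarrow> a \<in> U \<longleftrightarrow> b \<notin> U"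
    and deg: "\<And>u. u \<in> U \<Longrightarrow> 2 \<le> degree E u"
    and state: "augmenting_state VS E U S M xs"
  shows "(\<exists>M'. matching E M' \<and> hd xs \<notin> \<Union>M' \<and> S \<subseteq> \<Union>M') \<or>
    (\<exists>M' w u'. augmenting_state VS E U S M' (xs @ [w, u']))"
proof -
  have walk: "walk VS E xs" and nb: "non_backtracking xs" and "last xs \<in> U"
    using state unfolding augmenting_state_def by auto
  obtain w where uw: "{last xs, w} \<in> E" and w_back: "w \<noteq> xs ! (length xs - 2)"
    using exists_neighbour_avoiding[OF G deg[OF \<open>last xs \<in> U\<close>]] by blast
  have "w \<in> VS" using G uw unfolding graph_def by auto
  have walk_w: "walk VS E (xs @ [w])" using walk_appendI[OF walk, of "[w]"] uw \<open>w \<in> VS\<close> by simp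
  have nb_w: "non_backtracking (xs @ [w])" using nb w_back by (simp add: non_backtracking_snoc)
  have "w \<noteq> hd xs"
    using non_backtracking_walk_distinct[OF G acyclic walk_w nb_w] walk_nonempty[OF walk] by auto
  show ?thesis
  proof (cases "w \<in> \<Union>M")
    case True
    then obtain e where e: "e \<in> M" "w \<in> e" by blast
    show ?thesis
      using augmenting_state_extend[OF G bip state uw walk_w nb_w \<open>w \<noteq> hd xs\<close> e] by blast
  next
    case False
    then have "\<exists>M'. matching E M' \<and> hd xs \<notin> \<Union>M' \<and> S \<subseteq> \<Union>M'"
      by (rule augmenting_state_close[OF state uw \<open>w \<noteq> hd xs\<close>])
    then show ?thesis by blast
  qed
qed

lemma augmenting_state_saturates:
  assumes G: "graph VS E" and acyclic: "\<nexists>ys. is_cycle VS E ys"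
    and bip: "\<And>a b. {a, b} \<in> E \<Longrightarrow> a \<in> U \<longleftrightarrow> b \<notin> U"
    and deg: "\<And>u. u \<in> U \<Longrightarrow> 2 \<le> degree E u"
  shows "augmenting_state VS E U S M xs \<Longrightarrow> \<exists>M'. matching E M' \<and> hd xs \<notin> \<Union>M' \<and> S \<subseteq> \<Union>M'"
proof (induction "card VS - length xs" arbitrary: M xs rule: less_induct)
  case less
  from augmenting_state_step[OF G acyclic bip deg less.prems] show ?case
  proof
    assume "\<exists>M' w u'. augmenting_state VS E U S M' (xs @ [w, u'])"
    then obtain M' w u' where state: "augmenting_state VS E U S M' (xs @ [w, u'])" by blast
    then have walk: "walk VS E (xs @ [w, u'])" and "non_backtracking (xs @ [w, u'])"
      unfolding augmenting_state_def by auto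
    then have "distinct (xs @ [w, u'])" by (rule non_backtracking_walk_distinct[OF G acyclic])
    moreover have "set (xs @ [w, u']) \<subseteq> VS" "finite VS" using walk G by (auto simp: walk_def graph_def)
    ultimately have "length (xs @ [w, u']) \<le> card VS" by (metis card_mono distinct_card)
    then have "card VS - length (xs @ [w, u']) < card VS - length xs" by simp
    moreover have "hd (xs @ [w, u']) = hd xs"
      using less.prems walk_nonempty[of VS E xs] unfolding augmenting_state_def by simp
    ultimately show ?case using less.hyps[OF _ state] by simp
  qed
qed

lemma exists_matching_avoiding:
  assumes G: "graph VS E" and acyclic: "\<nexists>ys. is_cycle VS E ys"
    and bip: "\<And>a b. {a, b} \<in> E \<Longrightarrow> a \<in> U \<longleftrightarrow> b \<notin> U"
    and deg: "\<And>u. u \<in> U \<Longrightarrow> 2 \<le> degree E u"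
    and M: "matching E M" "S \<subseteq> \<Union>M" and v: "v \<notin> S" "v \<notin> U"
  shows "\<exists>M'. matching E M' \<and> v \<notin> \<Union>M' \<and> S \<subseteq> \<Union>M'"
proof (cases "v \<in> \<Union>M")
  case True
  then obtain e where e: "e \<in> M" "v \<in> e" by blast
  have "e \<in> E" using M(1) e unfolding matching_def by blast
  then obtain u where "u \<noteq> v" and e_eq: "e = {v, u}"
    using card_2_other[of e v] G e unfolding graph_def by blast
  have "{v, u} \<in> E" using \<open>e \<in> E\<close> e_eq by simp
  then have "u \<in> U" using bip v(2) by blast
  have "v \<in> VS" "u \<in> VS" using G \<open>{v, u} \<in> E\<close> unfolding graph_def by auto
  have "walk VS E [v, u]"
    using walk_appendI[of VS E "[v]" "[u]"] \<open>v \<in> VS\<close> \<open>u \<in> VS\<close> \<open>{v, u} \<in> E\<close> by simp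
  moreover have "\<Union>(M - {e}) = \<Union>M - {v, u}" using matching_Union_remove[OF M(1) e(1)] e_eq by simp
  ultimately have "augmenting_state VS E U S (M - {e}) [v, u]"
    unfolding augmenting_state_def non_backtracking_def
    using matching_subset[OF M(1) Diff_subset] M(2) v \<open>u \<in> U\<close> by auto
  from augmenting_state_saturates[OF G acyclic bip deg this] show ?thesis by simp
qed (use M in blast)

lemma mcount_insert_less:
  assumes "finite E" "matching E M" "K \<union> odd_vertices VS E r \<subseteq> \<Union>M" "v \<notin> \<Union>M"
  shows "mcount VS E r (insert v K) < mcount VS E r K"
proof -
  let ?sat = "\<lambda>X. {M. matching E M \<and> (\<forall>v \<in> X \<union> odd_vertices VS E r. v \<in> \<Union>M)}"
  have "?sat (insert v K) \<subset> ?sat K" using assms(2-4) by blast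
  moreover have "finite (?sat K)"
    using assms(1) by (rule finite_subset[rotated, OF finite_Pow_iff[THEN iffD2]]) (auto simp: matching_def)
  ultimately show ?thesis unfolding mcount_def by (simp add: psubset_card_mono)
qed

theorem claim2p10:
  fixes k :: nat and VS :: "'a set" and E :: "'a set set" and r :: 'a
    and K :: "'a set" and v0 :: 'a
  assumes "k \<ge> 1"
    and "valid k VS E r"
    and "K \<subseteq> even_vertices VS E r"
    and "mcount VS E r K > 0"
    and "v0 \<in> even_vertices VS E r - K"
  shows "mcount VS E r (insert v0 K) < mcount VS E r K"
proof -
  have tree: "is_tree VS E" and "r \<in> VS"
    and deg: "\<forall>v\<in>odd_vertices VS E r. degree E v = k + 1"
    using assms(2) unfolding valid_def rooted_tree_def by auto
  have G: "graph VS E" and acyclic: "\<nexists>ys. is_cycle VS E ys" using tree unfolding is_tree_def by auto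
  let ?U = "odd_vertices VS E r"
  have "{M. matching E M \<and> (\<forall>v\<in>K \<union> ?U. v \<in> \<Union>M)} \<noteq> {}"
    using assms(4) unfolding mcount_def card_gt_0_iff by (rule conjunct1)
  then obtain M where M: "matching E M" "K \<union> ?U \<subseteq> \<Union>M" by blast
  have deg2: "2 \<le> degree E u" if "u \<in> ?U" for u using deg assms(1) that by auto
  have v0: "v0 \<notin> K \<union> ?U" "v0 \<notin> ?U"
    using assms(5) unfolding even_vertices_def odd_vertices_def by auto
  obtain M' where M': "matching E M'" "v0 \<notin> \<Union>M'" "K \<union> ?U \<subseteq> \<Union>M'"
    using exists_matching_avoiding[OF G acyclic odd_vertices_edge_iff[OF tree \<open>r \<in> VS\<close>] deg2 M v0]
    by blast
  show ?thesis by (rule mcount_insert_less[OF graph_finite_edges[OF G] M'(1,3,2)])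
qed

end
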